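(* Let $G$ be a finite connected graph that is either non-bipartite or contains a node of degree larger than two. Then for every $k$ with $2\le k<|V|$, the $k$-node CIS relationship graph $G^{(k)}$ is non-bipartite.
   Context: Let $G=(V,E,L)$ be a finite undirected graph with node set $V$, edge set $E$ (unordered pairs of distinct nodes) and a set $L$ of edge labels (labels play no role here). For $V'\subseteq V$, the induced subgraph on $V'$ has node set $V'$ and edge set $\{(i,j)\in E: i,j\in V'\}$. A $k$-node CIS (connected induced subgraph) is an induced subgraph on a $k$-element set $V'\subseteq V$ that is connected; $C^{(k)}$ denotes the set of all $k$-node CISes of $G$. The $k$-node CIS relationship graph $G^{(k)}=(C^{(k)},R^{(k)})$ is the simple undirected graph whose nodes are the elements of $C^{(k)}$, where two distinct CISes $s_1,s_2\in C^{(k)}$ are adjacent iff their node sets share exactly $k-1$ nodes. *)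

theory Defs
  imports Main
begin

text \<open>A finite simple undirected graph is given by a finite node set V and a set E
of edges, each edge an unordered pair {i,j} of distinct nodes of V.
Edge labels play no role and are omitted.\<close>

definition simple_graph :: "'a set \<Rightarrow> 'a set set \<Rightarrow> bool" where
  "simple_graph V E \<longleftrightarrow> finite V \<and> (\<forall>e\<in>E. \<exists>i j. e = {i, j} \<and> i \<noteq> j \<and> i \<in> V \<and> j \<in> V)"

definition induced_connected :: "'a set set \<Rightarrow> 'a set \<Rightarrow> bool" where
  "induced_connected E S \<longleftrightarrow> S \<noteq> {} \<and>
     (\<forall>x\<in>S. \<forall>y\<in>S. (x, y) \<in> ({(u, v). u \<in> S \<and> v \<in> S \<and> {u, v} \<in> E})\<^sup>*)"

definition graph_connected :: "'a set \<Rightarrow> 'a set set \<Rightarrow> bool" where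
  "graph_connected V E \<longleftrightarrow> induced_connected E V"

definition degree :: "'a set set \<Rightarrow> 'a \<Rightarrow> nat" where
  "degree E v = card {u. {u, v} \<in> E}"

text \<open>C^(k): node sets of k-node connected induced subgraphs (an induced subgraph is
determined by its node set).\<close>
definition CIS :: "'a set \<Rightarrow> 'a set set \<Rightarrow> nat \<Rightarrow> 'a set set" where
  "CIS V E k = {S. S \<subseteq> V \<and> card S = k \<and> induced_connected E S}"

definition CIS_rel :: "'a set \<Rightarrow> 'a set set \<Rightarrow> nat \<Rightarrow> ('a set \<times> 'a set) set" where
  "CIS_rel V E k = {(s1, s2). s1 \<in> CIS V E k \<and> s2 \<in> CIS V E k \<and> s1 \<noteq> s2
                      \<and> card (s1 \<inter> s2) = k - 1}"

definition bipartite :: "'b set \<Rightarrow> ('b \<times> 'b) set \<Rightarrow> bool" where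
  "bipartite N R \<longleftrightarrow> (\<exists>c :: 'b \<Rightarrow> bool. \<forall>(x, y)\<in>R. x \<in> N \<and> y \<in> N \<longrightarrow> c x \<noteq> c y)"

definition graph_bipartite :: "'a set \<Rightarrow> 'a set set \<Rightarrow> bool" where
  "graph_bipartite V E \<longleftrightarrow> bipartite V {(u, v). {u, v} \<in> E}"

end

theory Submission
  imports Defs
begin

text \<open>Two configurations force an odd cycle in the relationship graph G^(k).
  First, an odd cycle C of G of length m > k: the m windows of k consecutive nodes of C are
  k-node CISes, consecutive windows share k - 1 nodes, and the windows close up after m steps.
  Second, a connected (k+1)-node set W with three distinct nodes whose deletion keeps W connected:
  the three deletions are k-node CISes pairwise sharing k - 1 nodes, a triangle. Such a set can be
  enlarged by any outside neighbour, which attaches to at most one of the three nodes, so it suffices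
  to find a small one: the node set of an odd cycle of length m \<le> k, or a node with three
  neighbours together with those neighbours (for k \<ge> 3). For k = 2 the three edges at such a node
  already form a triangle.\<close>

lemma simple_graph_edgeD:
  assumes "simple_graph V E" "{a, b} \<in> E"
  shows "a \<in> V" "b \<in> V" "a \<noteq> b"
proof -
  obtain i j where "{a, b} = {i, j}" "i \<noteq> j" "i \<in> V" "j \<in> V"
    using assms unfolding simple_graph_def by blast
  then show "a \<in> V" "b \<in> V" "a \<noteq> b" by (auto simp: doubleton_eq_iff)
qed

lemma induced_connected_singleton: "induced_connected E {v}"
  by (simp add: induced_connected_def)

lemma induced_connected_insert:
  assumes S: "induced_connected E S" and "w \<in> S" "{u, w} \<in> E"
  shows "induced_connected E (insert u S)"
proof -
  define R where "R = {(a, b). a \<in> insert u S \<and> b \<in> insert u S \<and> {a, b} \<in> E}"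
  have "{(a, b). a \<in> S \<and> b \<in> S \<and> {a, b} \<in> E} \<subseteq> R" unfolding R_def by auto
  then have inS: "(x, y) \<in> R\<^sup>*" if "x \<in> S" "y \<in> S" for x y
    using S that rtrancl_mono unfolding induced_connected_def by blast
  have "(u, w) \<in> R" "(w, u) \<in> R"
    using assms(2,3) unfolding R_def by (auto simp: insert_commute)
  then have "(u, y) \<in> R\<^sup>*" "(y, u) \<in> R\<^sup>*" if "y \<in> S" for y
    using inS[OF \<open>w \<in> S\<close> that] inS[OF that \<open>w \<in> S\<close>]
    by (meson converse_rtrancl_into_rtrancl rtrancl_into_rtrancl)+
  then have "(x, y) \<in> R\<^sup>*" if "x \<in> insert u S" "y \<in> insert u S" for x y
    using that inS by blast
  then show ?thesis unfolding induced_connected_def R_def by blast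
qed

lemma graph_connected_exit_edge:
  assumes "graph_connected V E" "W \<subseteq> V" "W \<noteq> {}" "W \<noteq> V"
  obtains u w where "u \<in> V - W" "w \<in> W" "{u, w} \<in> E"
proof -
  define R where "R = {(a, b). a \<in> V \<and> b \<in> V \<and> {a, b} \<in> E}"
  obtain w0 u0 where w0: "w0 \<in> W" and u0: "u0 \<in> V - W" using assms(2-4) by blast
  have "(w0, u0) \<in> R\<^sup>*" using assms(1,2) w0 u0
    unfolding graph_connected_def induced_connected_def R_def by blast
  moreover have "b \<in> W \<or> (\<exists>u\<in>V-W. \<exists>w\<in>W. {u, w} \<in> E)" if "(a, b) \<in> R\<^sup>*" "a \<in> W" for a b
    using that
  proof (induction rule: rtrancl_induct)
    case (step b c)
    then have "b \<in> V" "c \<in> V" "{c, b} \<in> E" unfolding R_def by (auto simp: insert_commute)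
    with step show ?case by blast
  qed simp
  ultimately show ?thesis using that w0 u0 by blast
qed

lemma bipartite_no_triangle:
  assumes "bipartite N R" "(x, y) \<in> R" "(y, z) \<in> R" "(x, z) \<in> R" "x \<in> N" "y \<in> N" "z \<in> N"
  shows False
proof -
  obtain c :: "_ \<Rightarrow> bool" where "\<forall>(x, y)\<in>R. x \<in> N \<and> y \<in> N \<longrightarrow> c x \<noteq> c y"
    using assms(1) unfolding bipartite_def by blast
  then have "c x \<noteq> c y" "c y \<noteq> c z" "c x \<noteq> c z" using assms(2-) by fast+
  then show False by blast
qed

lemma bipartite_no_odd_closed_walk:
  assumes "bipartite N R" "\<forall>i<m. (a i, a (Suc i)) \<in> R" "a ` {..m} \<subseteq> N"
    "a m = a 0" "odd m"
  shows False
proof -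
  obtain c :: "_ \<Rightarrow> bool" where c: "\<forall>(x, y)\<in>R. x \<in> N \<and> y \<in> N \<longrightarrow> c x \<noteq> c y"
    using assms(1) unfolding bipartite_def by blast
  have "c (a i) \<longleftrightarrow> (c (a 0) \<longleftrightarrow> even i)" if "i \<le> m" for i
    using that
  proof (induction i)
    case (Suc i)
    have "(a i, a (Suc i)) \<in> R" "a i \<in> N" "a (Suc i) \<in> N"
      using Suc.prems assms(2,3) by (auto simp: image_subset_iff)
    then have "c (a i) \<noteq> c (a (Suc i))" using c by blast
    with Suc show ?case by auto
  qed simp
  from this[of m] show False using assms(4,5) by simp
qed

definition walk :: "'a set set \<Rightarrow> (nat \<Rightarrow> 'a) \<Rightarrow> nat \<Rightarrow> bool" where
  "walk E p n \<longleftrightarrow> (\<forall>i<n. {p i, p (Suc i)} \<in> E)"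

lemma walk_snoc:
  assumes "walk E p n" "{p n, v} \<in> E"
  shows "walk E (p(Suc n := v)) (Suc n)"
  using assms unfolding walk_def by (auto simp: less_Suc_eq)

lemma walk_reverse:
  assumes "walk E p n"
  shows "walk E (\<lambda>i. p (n - i)) n"
  unfolding walk_def
proof (intro allI impI)
  fix i assume i: "i < n"
  then have "{p (n - Suc i), p (Suc (n - Suc i))} \<in> E" using assms unfolding walk_def by simp
  moreover have "Suc (n - Suc i) = n - i" using i by simp
  ultimately show "{p (n - i), p (n - Suc i)} \<in> E" by (simp add: insert_commute)
qed

lemma walk_append:
  assumes "walk E p n" "walk E q m" "p n = q 0"
  shows "walk E (\<lambda>i. if i \<le> n then p i else q (i - n)) (n + m)"
  unfolding walk_def
proof (intro allI impI)
  fix i assume i: "i < n + m"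
  show "{if i \<le> n then p i else q (i - n), if Suc i \<le> n then p (Suc i) else q (Suc i - n)} \<in> E"
  proof (cases "i < n")
    case True
    then show ?thesis using assms(1) unfolding walk_def by simp
  next
    case False
    then have "i - n < m" "Suc i - n = Suc (i - n)" using i by auto
    then show ?thesis using False assms(2,3) unfolding walk_def by (auto simp: le_Suc_eq)
  qed
qed

lemma walk_of_rtrancl:
  assumes "(x, y) \<in> {(u, v). u \<in> S \<and> v \<in> S \<and> {u, v} \<in> E}\<^sup>*"
  obtains p n where "walk E p n" "p 0 = x" "p n = y"
proof -
  from assms have "\<exists>p n. walk E p n \<and> p 0 = x \<and> p n = y"
  proof (induction rule: rtrancl_induct)
    case base
    show ?case by (rule exI[of _ "\<lambda>_. x"], rule exI[of _ 0]) (simp add: walk_def)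
  next
    case (step y z)
    then obtain p n where p: "walk E p n" "p 0 = x" "p n = y" by blast
    with step(2) have "walk E (p(Suc n := z)) (Suc n)" by (auto intro: walk_snoc)
    moreover have "(p(Suc n := z)) 0 = x" "(p(Suc n := z)) (Suc n) = z" using p by simp_all
    ultimately show ?case by blast
  qed
  with that show ?thesis by blast
qed

text \<open>Colour each node by the parity of some walk to it from a fixed root; a monochromatic
  edge closes an odd walk.\<close>
lemma not_bipartite_odd_closed_walk:
  assumes gc: "graph_connected V E" and nb: "\<not> graph_bipartite V E"
  obtains p m where "walk E p m" "p m = p 0" "odd m"
proof -
  obtain r where r: "r \<in> V" using gc unfolding graph_connected_def induced_connected_def by blast
  define P where "P x \<longleftrightarrow> (\<exists>p n. walk E p n \<and> p 0 = r \<and> p n = x \<and> even n)" for x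
  have walk_parity: "\<exists>p n. walk E p n \<and> p 0 = r \<and> p n = x \<and> (even n \<longleftrightarrow> P x)" if "x \<in> V" for x
  proof -
    have "(r, x) \<in> {(u, v). u \<in> V \<and> v \<in> V \<and> {u, v} \<in> E}\<^sup>*"
      using gc r that unfolding graph_connected_def induced_connected_def by blast
    then obtain p n where "walk E p n" "p 0 = r" "p n = x" by (rule walk_of_rtrancl)
    then show ?thesis unfolding P_def by blast
  qed
  obtain u v where uv: "{u, v} \<in> E" "u \<in> V" "v \<in> V" "P u = P v"
    using nb unfolding graph_bipartite_def bipartite_def by blast
  obtain p n1 where p: "walk E p n1" "p 0 = r" "p n1 = u" "even n1 \<longleftrightarrow> P u"
    using walk_parity[OF uv(2)] by blast
  obtain q n2 where q: "walk E q n2" "q 0 = r" "q n2 = v" "even n2 \<longleftrightarrow> P v"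
    using walk_parity[OF uv(3)] by blast
  define p' where "p' = p(Suc n1 := v)"
  define c where "c i = (if i \<le> Suc n1 then p' i else q (n2 - (i - Suc n1)))" for i
  have "walk E p' (Suc n1)" unfolding p'_def using p(1) by (rule walk_snoc) (simp add: p(3) uv(1))
  moreover have "p' (Suc n1) = q (n2 - 0)" by (simp add: p'_def q(3))
  ultimately have "walk E c (Suc n1 + n2)"
    unfolding c_def by (rule walk_append[OF _ walk_reverse[OF q(1)]])
  moreover have "c (Suc n1 + n2) = c 0"
    using p(2) q(2,3) by (cases n2) (simp_all add: c_def p'_def)
  moreover have "odd (Suc n1 + n2)" using p(4) q(4) uv(4) by simp
  ultimately show ?thesis by (rule that)
qed

text \<open>A repeated node splits an odd closed walk into two shorter closed walks, one of them odd.\<close>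
lemma odd_closed_walk_injective:
  assumes "walk E f m" "f m = f 0" "odd m"
  obtains g m' where "walk E g m'" "g m' = g 0" "odd m'" "inj_on g {0..<m'}"
  using assms
proof (induction m arbitrary: f rule: less_induct)
  case (less m)
  show ?case
  proof (cases "inj_on f {0..<m}")
    case True
    then show ?thesis using less.prems by blast
  next
    case False
    then obtain i j where ij: "i < j" "j < m" "f i = f j"
      unfolding inj_on_def by (metis atLeastLessThan_iff linorder_neqE_nat)
    define l where "l = j - i"
    define f1 where "f1 t = f (i + t)" for t
    define f2 where "f2 t = (if t \<le> i then f t else f (t + l))" for t
    have l: "0 < l" "l < m" "i + l = j" using ij unfolding l_def by auto
    have f1: "walk E f1 l" "f1 l = f1 0"
      using less.prems(2) ij l unfolding walk_def f1_def by auto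
    have f2_shift: "f2 t = f (t + l)" if "i \<le> t" for t
      using that ij l unfolding f2_def by (auto simp: add.commute)
    have f2_walk: "walk E f2 (m - l)"
      unfolding walk_def
    proof (intro allI impI)
      fix t assume t: "t < m - l"
      show "{f2 t, f2 (Suc t)} \<in> E"
      proof (cases "t < i")
        case True
        then show ?thesis using less.prems(2) ij unfolding walk_def f2_def by auto
      next
        case False
        then have "{f (t + l), f (Suc (t + l))} \<in> E" using less.prems(2) t unfolding walk_def by simp
        then show ?thesis using False f2_shift by simp
      qed
    qed
    have f2_closed: "f2 (m - l) = f2 0"
      using f2_shift[of "m - l"] less.prems(3) ij l unfolding f2_def by simp
    have "odd l \<or> odd (m - l)" using less.prems(4) l by auto
    then show ?thesis
    proof
      assume "odd l"
      then show ?thesis using less.IH less.prems(1) f1 \<open>l < m\<close> by blast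
    next
      assume "odd (m - l)"
      moreover have "m - l < m" using l by simp
      ultimately show ?thesis using less.IH less.prems(1) f2_walk f2_closed by blast
    qed
  qed
qed

text \<open>A cycle of length m is encoded as an m-periodic node sequence, so that every window of
  at most m consecutive indices is a path.\<close>
definition cycle :: "'a set set \<Rightarrow> (nat \<Rightarrow> 'a) \<Rightarrow> nat \<Rightarrow> bool" where
  "cycle E h m \<longleftrightarrow> (\<forall>i. {h i, h (Suc i)} \<in> E) \<and> (\<forall>i. h (i + m) = h i) \<and> inj_on h {0..<m}"

lemma cycle_of_closed_walk:
  assumes "walk E g m" "g m = g 0" "inj_on g {0..<m}" "0 < m"
  shows "cycle E (\<lambda>i. g (i mod m)) m"
  unfolding cycle_def
proof (intro conjI allI)
  fix i
  have "{g (i mod m), g (Suc (i mod m))} \<in> E"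
    using assms(1,4) unfolding walk_def by simp
  moreover have "g (Suc i mod m) = g (Suc (i mod m))" using assms(2,4) by (simp add: mod_Suc)
  ultimately show "{g (i mod m), g (Suc i mod m)} \<in> E" by simp
next
  show "inj_on (\<lambda>i. g (i mod m)) {0..<m}" using assms(3) by (simp add: inj_on_def)
qed simp

lemma cycle_edge: "cycle E h m \<Longrightarrow> {h i, h (Suc i)} \<in> E"
  unfolding cycle_def by blast

lemma cycle_mod:
  assumes "cycle E h m"
  shows "h (i mod m) = h i"
proof -
  have "h (r + q * m) = h r" for r q
  proof (induction q)
    case (Suc q)
    have "r + Suc q * m = (r + q * m) + m" by simp
    then show ?case using Suc assms unfolding cycle_def by metis
  qed simp
  from this[of "i mod m" "i div m"] show ?thesis by simp
qed

lemma cycle_inj_on_window: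
  assumes cyc: "cycle E h m"
  shows "inj_on h {j..<j + m}"
proof (rule inj_onI)
  fix a b assume a: "a \<in> {j..<j + m}" and b: "b \<in> {j..<j + m}" and "h a = h b"
  then have "m > 0" by auto
  with \<open>h a = h b\<close> cyc have "a mod m = b mod m"
    unfolding cycle_mod[OF cyc, of a, symmetric] cycle_mod[OF cyc, of b, symmetric]
    by (auto simp: cycle_def inj_on_def)
  then have "m dvd (max a b - min a b)"
    by (metis max_def min_def mod_eq_dvd_iff_nat nat_le_linear)
  moreover have "max a b - min a b < m" using a b by auto
  ultimately show "a = b" using nat_dvd_not_less[of "max a b - min a b" m] by linarith
qed

lemma cycle_card_window:
  assumes "cycle E h m" "n \<le> m"
  shows "card (h ` {j..<j + n}) = n"
  using inj_on_subset[OF cycle_inj_on_window[OF assms(1), of j]] assms(2)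
  by (simp add: card_image)

lemma cycle_image_window:
  assumes cyc: "cycle E h m"
  shows "h ` {j..<j + m} = h ` {0..<m}"
proof (cases "m = 0")
  case False
  have "h i \<in> h ` {0..<m}" for i
  proof -
    have "i mod m \<in> {0..<m}" using False by simp
    then show ?thesis using cycle_mod[OF cyc, of i] by (metis imageI)
  qed
  then have "h ` {j..<j + m} \<subseteq> h ` {0..<m}" by blast
  moreover have "card (h ` {j..<j + m}) = card (h ` {0..<m})"
    using cycle_card_window[OF cyc, of m j] cycle_card_window[OF cyc, of m 0] by simp
  ultimately show ?thesis by (simp add: card_subset_eq)
qed simp

lemma path_induced_connected:
  assumes "\<And>i. {h i, h (Suc i)} \<in> E"
  shows "induced_connected E (h ` {i..<i + Suc n})"
proof (induction n)
  case 0
  then show ?case by (simp add: induced_connected_singleton)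
next
  case (Suc n)
  have "{h (i + Suc n), h (i + n)} \<in> E" using assms[of "i + n"] by (simp add: insert_commute)
  moreover have "h (i + n) \<in> h ` {i..<i + Suc n}" by simp
  ultimately have "induced_connected E (insert (h (i + Suc n)) (h ` {i..<i + Suc n}))"
    using induced_connected_insert[OF Suc] by blast
  moreover have "h ` {i..<i + Suc (Suc n)} = insert (h (i + Suc n)) (h ` {i..<i + Suc n})"
    by (simp add: atLeastLessThanSuc)
  ultimately show ?case by simp
qed

lemma simple_graph_odd_cycle_length:
  assumes "simple_graph V E" "cycle E h m" "odd m"
  shows "3 \<le> m"
proof -
  have "m \<noteq> 1"
  proof
    assume "m = 1"
    then have "h (0 + 1) = h 0" using assms(2) unfolding cycle_def by blast
    then show False using simple_graph_edgeD(3)[OF assms(1) cycle_edge[OF assms(2), of 0]] by simp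
  qed
  with \<open>odd m\<close> show ?thesis by presburger
qed

lemma not_bipartite_odd_cycle:
  assumes "graph_connected V E" "\<not> graph_bipartite V E"
  obtains h m where "cycle E h m" "odd m"
proof -
  obtain p n where "walk E p n" "p n = p 0" "odd n"
    using not_bipartite_odd_closed_walk[OF assms] .
  then obtain g m where "walk E g m" "g m = g 0" "odd m" "inj_on g {0..<m}"
    by (rule odd_closed_walk_injective)
  with cycle_of_closed_walk[of E g m] that show ?thesis by (metis odd_pos)
qed

lemma CIS_delete:
  assumes "W \<subseteq> V" "finite W" "card W = Suc k" "t \<in> W" "induced_connected E (W - {t})"
  shows "W - {t} \<in> CIS V E k"
  using assms unfolding CIS_def by auto

lemma CIS_rel_delete:
  assumes "W \<subseteq> V" "finite W" "card W = Suc k" "s \<in> W" "t \<in> W" "s \<noteq> t"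
    "induced_connected E (W - {s})" "induced_connected E (W - {t})"
  shows "(W - {s}, W - {t}) \<in> CIS_rel V E k"
proof -
  have "(W - {s}) \<inter> (W - {t}) = W - {s, t}" by blast
  moreover have "card (W - {s, t}) = card W - card {s, t}"
    using assms(2,4,5) by (intro card_Diff_subset) auto
  ultimately have "card ((W - {s}) \<inter> (W - {t})) = k - 1" using assms(3,6) by simp
  moreover have "W - {s} \<noteq> W - {t}" using assms(4-6) by blast
  moreover have "W - {s} \<in> CIS V E k" "W - {t} \<in> CIS V E k"
    using CIS_delete[OF assms(1-3)] assms(4,5,7,8) by blast+
  ultimately show ?thesis unfolding CIS_rel_def by blast
qed

definition three_deletable :: "'a set set \<Rightarrow> 'a set \<Rightarrow> bool" where
  "three_deletable E W \<longleftrightarrow> induced_connected E W \<and>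
     (\<exists>x y z. x \<in> W \<and> y \<in> W \<and> z \<in> W \<and> x \<noteq> y \<and> x \<noteq> z \<and> y \<noteq> z \<and>
       (\<forall>t\<in>{x, y, z}. induced_connected E (W - {t})))"

lemma three_deletable_not_bipartite:
  assumes "W \<subseteq> V" "finite W" "card W = Suc k" "three_deletable E W"
  shows "\<not> bipartite (CIS V E k) (CIS_rel V E k)"
proof
  assume bip: "bipartite (CIS V E k) (CIS_rel V E k)"
  obtain x y z where xyz: "x \<in> W" "y \<in> W" "z \<in> W" "x \<noteq> y" "x \<noteq> z" "y \<noteq> z"
    and del: "\<forall>t\<in>{x, y, z}. induced_connected E (W - {t})"
    using assms(4) unfolding three_deletable_def by blast
  have CIS: "W - {t} \<in> CIS V E k" if "t \<in> {x, y, z}" for t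
    using CIS_delete[OF assms(1-3)] xyz del that by blast
  have rel: "(W - {s}, W - {t}) \<in> CIS_rel V E k" if "s \<in> {x, y, z}" "t \<in> {x, y, z}" "s \<noteq> t" for s t
    using CIS_rel_delete[OF assms(1-3)] xyz del that by blast
  show False
    using bipartite_no_triangle[OF bip rel[of x y] rel[of y z] rel[of x z] CIS CIS CIS] xyz by simp
qed

lemma three_deletable_insert:
  assumes "three_deletable E W" "w \<in> W" "{u, w} \<in> E" "u \<notin> W"
  shows "three_deletable E (insert u W)"
proof -
  obtain x y z where xyz: "x \<in> W" "y \<in> W" "z \<in> W" "x \<noteq> y" "x \<noteq> z" "y \<noteq> z"
    and del: "\<forall>t\<in>{x, y, z}. induced_connected E (W - {t})" and W: "induced_connected E W"
    using assms(1) unfolding three_deletable_def by blast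
  obtain a b where ab: "a \<in> {x, y, z}" "b \<in> {x, y, z}" "a \<noteq> b" "a \<noteq> w" "b \<noteq> w"
    using xyz by auto
  have "induced_connected E (insert u W - {t})" if "t \<in> {x, y, z}" "t \<noteq> w" for t
  proof -
    have "induced_connected E (insert u (W - {t}))"
      using induced_connected_insert[OF _ _ assms(3)] del that assms(2) by blast
    moreover have "insert u W - {t} = insert u (W - {t})" using that xyz assms(4) by auto
    ultimately show ?thesis by simp
  qed
  moreover have "insert u W - {u} = W" using assms(4) by simp
  ultimately have "\<forall>t\<in>{u, a, b}. induced_connected E (insert u W - {t})" using W ab by auto
  moreover have "induced_connected E (insert u W)" using induced_connected_insert[OF W assms(2,3)] .
  moreover have "u \<noteq> a" "u \<noteq> b" "a \<in> insert u W" "b \<in> insert u W"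
    using ab xyz assms(4) by auto
  ultimately show ?thesis unfolding three_deletable_def using ab(3) by blast
qed

lemma three_deletable_grow:
  assumes "simple_graph V E" "graph_connected V E" "W \<subseteq> V" "three_deletable E W"
    "card W \<le> n" "n \<le> card V"
  obtains W' where "W' \<subseteq> V" "card W' = n" "three_deletable E W'"
  using assms(5,6)
proof (induction n arbitrary: thesis rule: dec_induct)
  case base
  then show ?case using assms(3,4) by blast
next
  case (step n)
  then obtain W' where W': "W' \<subseteq> V" "card W' = n" "three_deletable E W'" by auto
  have "finite V" using assms(1) unfolding simple_graph_def by blast
  then have "W' \<noteq> V" using W' step.prems(2) by auto
  moreover have "W' \<noteq> {}" using W'(3) unfolding three_deletable_def by blast
  ultimately obtain u w where u: "u \<in> V" "u \<notin> W'" and "w \<in> W'" "{u, w} \<in> E"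
    using graph_connected_exit_edge[OF assms(2) W'(1)] by blast
  then have "three_deletable E (insert u W')" using three_deletable_insert[OF W'(3)] by blast
  moreover have "card (insert u W') = Suc n"
    using W' u \<open>finite V\<close> finite_subset by (metis card_insert_disjoint)
  ultimately show ?case using step.prems(1) W'(1) u(1) by blast
qed

lemma three_deletable_subset_not_bipartite:
  assumes sg: "simple_graph V E" and gc: "graph_connected V E"
    and "W \<subseteq> V" "three_deletable E W" "card W \<le> Suc k" "k < card V"
  shows "\<not> bipartite (CIS V E k) (CIS_rel V E k)"
proof -
  obtain W' where W': "W' \<subseteq> V" "card W' = Suc k" "three_deletable E W'"
    using three_deletable_grow[OF sg gc assms(3-5) Suc_leI[OF assms(6)]] .
  moreover have "finite W'"
    using W'(1) sg finite_subset unfolding simple_graph_def by blast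
  ultimately show ?thesis using three_deletable_not_bipartite by blast
qed

lemma induced_connected_star:
  assumes "finite S" "\<forall>s\<in>S. {s, v} \<in> E"
  shows "induced_connected E (insert v S)"
  using assms
proof (induction S rule: finite_induct)
  case empty
  then show ?case by (simp add: induced_connected_singleton)
next
  case (insert s S)
  then have "induced_connected E (insert s (insert v S))"
    by (intro induced_connected_insert[of E "insert v S" v]) auto
  then show ?case by (simp add: insert_commute)
qed

lemma star_three_deletable:
  assumes "{a, v} \<in> E" "{b, v} \<in> E" "{c, v} \<in> E"
    "a \<noteq> b" "a \<noteq> c" "b \<noteq> c" "a \<noteq> v" "b \<noteq> v" "c \<noteq> v"
  shows "three_deletable E {v, a, b, c}"
proof -
  have leaves: "induced_connected E (insert v S)" if "S \<subseteq> {a, b, c}" for S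
    using induced_connected_star[of S v E] assms(1-3) that finite_subset by blast
  have "{v, a, b, c} - {a} = insert v {b, c}" "{v, a, b, c} - {b} = insert v {a, c}"
    "{v, a, b, c} - {c} = insert v {a, b}"
    using assms(4-9) by auto
  then have "\<forall>t\<in>{a, b, c}. induced_connected E ({v, a, b, c} - {t})"
    using leaves by auto
  moreover have "induced_connected E {v, a, b, c}" using leaves by blast
  ultimately show ?thesis unfolding three_deletable_def using assms(4-6) by blast
qed

lemma cycle_three_deletable:
  assumes cyc: "cycle E h m" and m: "3 \<le> m"
  shows "three_deletable E (h ` {0..<m})"
proof -
  have connected: "induced_connected E (h ` {i..<i + Suc n})" for i n
    using path_induced_connected[of h E, OF cycle_edge[OF cyc]] .
  have distinct: "h i \<noteq> h j" if "i < j" "j < m" for i j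
    using inj_onD[OF cycle_inj_on_window[OF cyc, of 0], of i j] that by auto
  have delete: "h ` {0..<m} - {h t} = h ` {Suc t..<Suc t + Suc (m - 2)}" for t
  proof -
    have window: "{t..<t + m} = insert t {Suc t..<Suc t + Suc (m - 2)}" using m by auto
    have "h t \<notin> h ` {Suc t..<Suc t + Suc (m - 2)}"
    proof
      assume "h t \<in> h ` {Suc t..<Suc t + Suc (m - 2)}"
      then obtain s where "s \<in> {Suc t..<Suc t + Suc (m - 2)}" "h t = h s" by blast
      then show False using inj_onD[OF cycle_inj_on_window[OF cyc, of t], of t s] window by auto
    qed
    moreover have "h ` {0..<m} = insert (h t) (h ` {Suc t..<Suc t + Suc (m - 2)})"
      using cycle_image_window[OF cyc, of t] window by simp
    ultimately show ?thesis by blast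
  qed
  have "induced_connected E (h ` {0..<m} - {h t})" for t
    unfolding delete by (rule connected)
  then have "\<forall>t\<in>{h 0, h 1, h 2}. induced_connected E (h ` {0..<m} - {t})" by blast
  moreover have "induced_connected E (h ` {0..<m})"
    using connected[of 0 "m - 1"] m by simp
  moreover have "h 0 \<in> h ` {0..<m}" "h 1 \<in> h ` {0..<m}" "h 2 \<in> h ` {0..<m}" using m by auto
  moreover have "h 0 \<noteq> h 1" "h 0 \<noteq> h 2" "h 1 \<noteq> h 2" using distinct m by auto
  ultimately show ?thesis unfolding three_deletable_def by blast
qed

lemma cycle_windows_not_bipartite:
  assumes sg: "simple_graph V E" and cyc: "cycle E h m" and "odd m" "0 < k" "k < m"
  shows "\<not> bipartite (CIS V E k) (CIS_rel V E k)"
proof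
  assume bip: "bipartite (CIS V E k) (CIS_rel V E k)"
  define A where "A i = h ` {i..<i + k}" for i
  have CIS: "A i \<in> CIS V E k" for i
  proof -
    have "A i \<subseteq> V" unfolding A_def using simple_graph_edgeD(1)[OF sg cycle_edge[OF cyc]] by blast
    moreover have "card (A i) = k" unfolding A_def using cycle_card_window[OF cyc] assms(5) by simp
    moreover have "induced_connected E (A i)"
      using path_induced_connected[of h E, OF cycle_edge[OF cyc], of i "k - 1"] assms(4)
      unfolding A_def by simp
    ultimately show ?thesis unfolding CIS_def by blast
  qed
  have "(A i, A (Suc i)) \<in> CIS_rel V E k" for i
  proof -
    have "A i \<inter> A (Suc i) = h ` ({i..<i + k} \<inter> {Suc i..<Suc i + k})"
      unfolding A_def using assms(5)
      by (intro inj_on_image_Int[OF cycle_inj_on_window[OF cyc, of i], symmetric]) auto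
    also have "{i..<i + k} \<inter> {Suc i..<Suc i + k} = {Suc i..<Suc i + (k - 1)}" using assms(4) by auto
    finally have "card (A i \<inter> A (Suc i)) = k - 1"
      using cycle_card_window[OF cyc, of "k - 1" "Suc i"] assms(5) by simp
    moreover from this have "A i \<noteq> A (Suc i)" using CIS[of i] assms(4) unfolding CIS_def by auto
    ultimately show ?thesis unfolding CIS_rel_def using CIS by blast
  qed
  moreover have "A m = A 0"
  proof -
    have "A m = h ` ((\<lambda>i. i + m) ` {0..<k})"
      unfolding A_def by (simp add: add.commute)
    also have "\<dots> = h ` {0..<k}"
      using cyc unfolding image_image cycle_def by simp
    finally show ?thesis unfolding A_def by simp
  qed
  ultimately show False
    using bipartite_no_odd_closed_walk[OF bip, of m A] CIS \<open>odd m\<close> by blast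
qed

lemma odd_cycle_CIS_not_bipartite:
  assumes sg: "simple_graph V E" and gc: "graph_connected V E" and cyc: "cycle E h m"
    and "odd m" "0 < k" "k < card V"
  shows "\<not> bipartite (CIS V E k) (CIS_rel V E k)"
proof (cases "k < m")
  case True
  then show ?thesis using cycle_windows_not_bipartite[OF sg cyc] assms(4,5) by blast
next
  case False
  have m: "3 \<le> m" using simple_graph_odd_cycle_length[OF sg cyc \<open>odd m\<close>] .
  have "h ` {0..<m} \<subseteq> V" using simple_graph_edgeD(1)[OF sg cycle_edge[OF cyc]] by blast
  moreover have "card (h ` {0..<m}) \<le> Suc k" using cycle_card_window[OF cyc, of m 0] False by simp
  ultimately show ?thesis
    using three_deletable_subset_not_bipartite[OF sg gc _ cycle_three_deletable[OF cyc m]] assms(6)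
    by blast
qed

lemma degree_three_neighbours:
  assumes "2 < degree E v"
  obtains a b c where "{a, v} \<in> E" "{b, v} \<in> E" "{c, v} \<in> E" "a \<noteq> b" "a \<noteq> c" "b \<noteq> c"
proof -
  obtain T where "T \<subseteq> {u. {u, v} \<in> E}" "card T = 3"
    using assms obtain_subset_with_card_n[of 3 "{u. {u, v} \<in> E}"] unfolding degree_def by auto
  then show ?thesis using that unfolding card_3_iff by auto
qed

lemma edge_CIS:
  assumes "simple_graph V E" "{a, v} \<in> E"
  shows "{v, a} \<in> CIS V E 2"
proof -
  have "induced_connected E (insert a {v})"
    by (rule induced_connected_insert[OF induced_connected_singleton _ assms(2)]) simp
  then show ?thesis
    using simple_graph_edgeD[OF assms] unfolding CIS_def by (auto simp: insert_commute)
qed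

lemma high_degree_CIS_not_bipartite:
  assumes sg: "simple_graph V E" and gc: "graph_connected V E" and "2 < degree E v"
    and "2 \<le> k" "k < card V"
  shows "\<not> bipartite (CIS V E k) (CIS_rel V E k)"
proof -
  obtain a b c where abc: "{a, v} \<in> E" "{b, v} \<in> E" "{c, v} \<in> E" "a \<noteq> b" "a \<noteq> c" "b \<noteq> c"
    using degree_three_neighbours[OF assms(3)] .
  have V: "v \<in> V" "a \<in> V" "b \<in> V" "c \<in> V" "a \<noteq> v" "b \<noteq> v" "c \<noteq> v"
    using simple_graph_edgeD[OF sg abc(1)] simple_graph_edgeD[OF sg abc(2)]
      simple_graph_edgeD[OF sg abc(3)] by auto
  have star: "three_deletable E {v, a, b, c}" using star_three_deletable[OF abc V(5-7)] .
  show ?thesis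
  proof (cases "k = 2")
    case True
    have CIS: "{v, t} \<in> CIS V E 2" if "{t, v} \<in> E" for t
      using edge_CIS[OF sg that] .
    have rel: "({v, s}, {v, t}) \<in> CIS_rel V E 2"
      if "{s, v} \<in> E" "{t, v} \<in> E" "s \<noteq> v" "t \<noteq> v" "s \<noteq> t" for s t
    proof -
      have meet: "{v, s} \<inter> {v, t} = {v}" and "{v, s} \<noteq> {v, t}" using that(3-5) by auto
      then have "card ({v, s} \<inter> {v, t}) = 2 - 1" unfolding meet by simp
      then show ?thesis using CIS[OF that(1)] CIS[OF that(2)] \<open>{v, s} \<noteq> {v, t}\<close>
        unfolding CIS_rel_def by blast
    qed
    show ?thesis
    proof
      assume "bipartite (CIS V E k) (CIS_rel V E k)"
      then show False
        using True bipartite_no_triangle[OF _ rel[OF abc(1,2) V(5,6) abc(4)]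
            rel[OF abc(2,3) V(6,7) abc(6)] rel[OF abc(1,3) V(5,7) abc(5)]
            CIS[OF abc(1)] CIS[OF abc(2)] CIS[OF abc(3)]]
        by simp
    qed
  next
    case False
    have "{v, a, b, c} \<subseteq> V" "card {v, a, b, c} \<le> Suc k"
      using V False assms(4) by (auto simp: card_insert_if)
    then show ?thesis using three_deletable_subset_not_bipartite[OF sg gc _ star] assms(5) by blast
  qed
qed

theorem theorem2:
  fixes V :: "'a set" and E :: "'a set set" and k :: nat
  assumes "simple_graph V E"
    and "graph_connected V E"
    and "\<not> graph_bipartite V E \<or> (\<exists>v\<in>V. degree E v > 2)"
    and "2 \<le> k" and "k < card V"
  shows "\<not> bipartite (CIS V E k) (CIS_rel V E k)"
proof (cases "graph_bipartite V E")
  case False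
  then obtain h m where "cycle E h m" "odd m"
    using not_bipartite_odd_cycle[OF assms(2)] by blast
  then show ?thesis using odd_cycle_CIS_not_bipartite[OF assms(1,2)] assms(4,5) by simp
next
  case True
  then obtain v where "2 < degree E v" using assms(3) by blast
  then show ?thesis using high_degree_CIS_not_bipartite[OF assms(1,2)] assms(4,5) by blast
qed

end
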